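(* Let $n\ge2$. Then $H_n\rtimes S_n$ is generated by at most $3$ elements.
   Context: $\mathbb{N}=\{1,2,\dots\}$, $X_n=\{1,\dots,n\}\times\mathbb{N}$. $H_n$ is the group of bijections $g$ of $X_n$ with $z_i(g)\in\mathbb{N}$, $t_i(g)\in\mathbb{Z}$ such that $(i,m)g=(i,m+t_i(g))$ for all $m\ge z_i(g)$ (right action). Each $\sigma\in S_n$ acts on $X_n$ by $(i,m)\sigma=(i\sigma,m)$, and $H_n\rtimes S_n$ is the subgroup of $\mathrm{Sym}(X_n)$ generated by $H_n$ and these permutations. *)

theory Defs
  imports "HOL-Algebra.Algebra" "HOL-Combinatorics.Permutations"
begin

text \<open>Natural numbers start at 1 in the paper; we use HOL nat with explicit bounds.
  X_n = {1..n} x {1,2,...}. Elements of Sym(X_n) are the carrier of BijGroup X_n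
  (extensional bijections of X_n).\<close>

definition Xn :: "nat \<Rightarrow> (nat \<times> nat) set" where
  "Xn n = {1..n} \<times> {m. 1 \<le> m}"

definition SymX :: "nat \<Rightarrow> (nat \<times> nat \<Rightarrow> nat \<times> nat) monoid" where
  "SymX n = BijGroup (Xn n)"

definition Hn :: "nat \<Rightarrow> (nat \<times> nat \<Rightarrow> nat \<times> nat) set" where
  "Hn n = {g \<in> Bij (Xn n). \<exists>z::nat \<Rightarrow> nat. \<exists>t::nat \<Rightarrow> int.
      \<forall>i\<in>{1..n}. 1 \<le> z i \<and> (\<forall>m. z i \<le> m \<longrightarrow>
         fst (g (i, m)) = i \<and> int (snd (g (i, m))) = int m + t i)}"

definition perm_lift :: "nat \<Rightarrow> (nat \<Rightarrow> nat) \<Rightarrow> (nat \<times> nat \<Rightarrow> nat \<times> nat)" where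
  "perm_lift n \<sigma> = restrict (\<lambda>(i, m). (\<sigma> i, m)) (Xn n)"

definition Sn_lift :: "nat \<Rightarrow> (nat \<times> nat \<Rightarrow> nat \<times> nat) set" where
  "Sn_lift n = {perm_lift n \<sigma> | \<sigma>. \<sigma> permutes {1..n}}"

text \<open>H_n \<rtimes> S_n as the subgroup of Sym(X_n) generated by H_n and the lifted permutations.\<close>

definition HnSn :: "nat \<Rightarrow> (nat \<times> nat \<Rightarrow> nat \<times> nat) set" where
  "HnSn n = generate (SymX n) (Hn n \<union> Sn_lift n)"

end

(* The lifts of an n-cycle and of the transposition of branches 1 and 2 generate the lifted copy of
   S_n. The map shift n 2 translates the line formed by branches 2 and 1 by one step, so together with
   the transposition of (1,1) and (1,2) it yields all transpositions of this line; conjugating by S_n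
   gives all transpositions of X_n, hence every finitary permutation. Conjugates of shift n 2 are the
   shifts n j, with translation vectors e_1 - e_j; these span the integer vectors with coordinate sum
   zero, and a counting argument shows that the translation vector of every element of H_n has sum zero.
   So every element of H_n is a product of shifts and a finitary permutation. Finally, for n >= 3 the
   transposition of (1,1) and (1,2) is the commutator of shift n 2 and shift n 3, while for n = 2 the
   n-cycle is the transposition of branches; either way three generators suffice. *)

theory Submission
  imports Defs
begin

section \<open>Transpositions in symmetric groups\<close>

lemma BijGroup_mult_eq: "f \<in> Bij S \<Longrightarrow> g \<in> Bij S \<Longrightarrow> f \<otimes>\<^bsub>BijGroup S\<^esub> g = compose S f g"
  by (simp add: BijGroup_def)

lemma BijGroup_one_eq: "\<one>\<^bsub>BijGroup S\<^esub> = (\<lambda>x\<in>S. x)"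
  by (simp add: BijGroup_def)

lemma carrier_BijGroup: "carrier (BijGroup S) = Bij S"
  by (simp add: BijGroup_def)

lemma compose_restrict: "g ` S \<subseteq> S \<Longrightarrow> compose S (restrict f S) (restrict g S) = restrict (f \<circ> g) S"
  by (auto simp: compose_def fun_eq_iff)

definition Sym_transpose :: "'a set \<Rightarrow> 'a \<Rightarrow> 'a \<Rightarrow> 'a \<Rightarrow> 'a" where
  "Sym_transpose S a b = restrict (transpose a b) S"

lemma Sym_transpose_Bij: "a \<in> S \<Longrightarrow> b \<in> S \<Longrightarrow> Sym_transpose S a b \<in> Bij S"
  by (auto simp: Sym_transpose_def Bij_def)

lemma Sym_transpose_commute: "Sym_transpose S a b = Sym_transpose S b a"
  by (simp add: Sym_transpose_def transpose_commute)

lemma Sym_transpose_same: "Sym_transpose S a a = (\<lambda>x\<in>S. x)"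
  by (simp add: Sym_transpose_def id_def)

lemma Sym_transpose_triple:
  "\<lbrakk>a \<in> S; b \<in> S; c \<in> S; a \<noteq> c; b \<noteq> c\<rbrakk> \<Longrightarrow>
    compose S (Sym_transpose S a b) (compose S (Sym_transpose S b c) (Sym_transpose S a b)) = Sym_transpose S a c"
  by (rule ext) (auto simp: Sym_transpose_def compose_def transpose_triple transpose_def)

lemma Sym_transpose_conj:
  assumes g: "g \<in> Bij S" and "a \<in> S" "b \<in> S"
  shows "compose S g (compose S (Sym_transpose S a b) (restrict (inv_into S g) S)) = Sym_transpose S (g a) (g b)"
proof (rule ext)
  fix x
  have bij: "bij_betw g S S" using g by (simp add: Bij_def)
  show "compose S g (compose S (Sym_transpose S a b) (restrict (inv_into S g) S)) x = Sym_transpose S (g a) (g b) x"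
  proof (cases "x \<in> S")
    case True
    define y where "y = inv_into S g x"
    have y: "y \<in> S" "g y = x"
      using True bij unfolding y_def by (auto simp: bij_betw_def inv_into_into f_inv_into_f)
    have "g (transpose a b y) = transpose (g a) (g b) (g y)"
      using bij_betw_imp_inj_on[OF bij] assms y(1) by (auto simp: transpose_def inj_on_eq_iff)
    then show ?thesis using True y by (simp add: compose_def Sym_transpose_def y_def)
  qed (simp add: compose_def Sym_transpose_def)
qed

lemma bij_betw_support:
  assumes "bij_betw f S S" shows "bij_betw f {x \<in> S. f x \<noteq> x} {x \<in> S. f x \<noteq> x}"
proof -
  have inj: "inj_on f S" using assms by (rule bij_betw_imp_inj_on)
  have "f ` {x \<in> S. f x \<noteq> x} = {x \<in> S. f x \<noteq> x}"
  proof (intro equalityI subsetI)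
    fix y assume "y \<in> f ` {x \<in> S. f x \<noteq> x}"
    then obtain x where "x \<in> S" "f x \<noteq> x" "y = f x" by blast
    then show "y \<in> {x \<in> S. f x \<noteq> x}" using inj bij_betw_apply[OF assms] by (auto simp: inj_on_eq_iff)
  next
    fix y assume y: "y \<in> {x \<in> S. f x \<noteq> x}"
    then obtain x where "x \<in> S" "y = f x" using assms by (auto simp: bij_betw_def)
    then show "y \<in> f ` {x \<in> S. f x \<noteq> x}" using y by auto
  qed
  then show ?thesis using inj_on_subset[OF inj] by (auto simp: bij_betw_def)
qed

context
  fixes S :: "'a set" and K
  assumes K: "subgroup K (BijGroup S)"
begin

lemma Sym_subgroup_Bij: "f \<in> K \<Longrightarrow> f \<in> Bij S"
  using subgroup.subset[OF K] by (auto simp: carrier_BijGroup)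

lemma Sym_subgroup_compose: "f \<in> K \<Longrightarrow> g \<in> K \<Longrightarrow> compose S f g \<in> K"
  using subgroup.m_closed[OF K, of f g] by (simp add: Sym_subgroup_Bij BijGroup_mult_eq)

lemma Sym_subgroup_inv: "f \<in> K \<Longrightarrow> restrict (inv_into S f) S \<in> K"
  using subgroup.m_inv_closed[OF K, of f] by (simp add: Sym_subgroup_Bij inv_BijGroup)

lemma Sym_subgroup_id: "(\<lambda>x\<in>S. x) \<in> K"
  using subgroup.one_closed[OF K] by (simp add: BijGroup_one_eq)

lemma Sym_transpose_conj_in_subgroup:
  assumes g: "g \<in> K" and "a \<in> S" "b \<in> S"
  shows "Sym_transpose S (g a) (g b) \<in> K \<longleftrightarrow> Sym_transpose S a b \<in> K"
proof
  have bij: "bij_betw g S S" using Sym_subgroup_Bij[OF g] by (simp add: Bij_def)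
  define g' where "g' = restrict (inv_into S g) S"
  have g': "g' \<in> K" "g' (g a) = a" "g' (g b) = b" "g a \<in> S" "g b \<in> S"
    using Sym_subgroup_inv[OF g] assms bij bij_betw_imp_inj_on[OF bij]
    by (auto simp: g'_def bij_betw_apply)
  assume "Sym_transpose S (g a) (g b) \<in> K"
  then show "Sym_transpose S a b \<in> K"
    using Sym_transpose_conj[OF Sym_subgroup_Bij[OF g'(1)] g'(4,5)] g'(1-3)
      Sym_subgroup_compose Sym_subgroup_inv by metis
next
  assume "Sym_transpose S a b \<in> K"
  then show "Sym_transpose S (g a) (g b) \<in> K"
    using Sym_transpose_conj[OF Sym_subgroup_Bij[OF g] assms(2,3)] g
      Sym_subgroup_compose Sym_subgroup_inv by metis
qed

lemma Sym_transpose_in_subgroup_adjacent: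
  fixes p :: "int \<Rightarrow> 'a"
  assumes p: "range p \<subseteq> S" and g: "g \<in> K" "\<And>k. g (p k) = p (k + 1)"
    and base: "Sym_transpose S (p k\<^sub>0) (p (k\<^sub>0 + 1)) \<in> K"
  shows "Sym_transpose S (p k) (p (k + 1)) \<in> K"
proof -
  have pS: "p k \<in> S" for k using p by auto
  define P where "P k \<longleftrightarrow> Sym_transpose S (p k) (p (k + 1)) \<in> K" for k
  have step: "P (k + 1) \<longleftrightarrow> P k" for k
    unfolding P_def using Sym_transpose_conj_in_subgroup[OF g(1) pS pS, of k "k + 1"] by (simp add: g(2))
  show ?thesis
  proof (induction k rule: int_induct[where k = k\<^sub>0])
    case base then show ?case by (rule \<open>Sym_transpose S (p k\<^sub>0) (p (k\<^sub>0 + 1)) \<in> K\<close>)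
  next
    case (step1 i) then show ?case using step[of i] by (simp add: P_def)
  next
    case (step2 i) then show ?case using step[of "i - 1"] by (simp add: P_def)
  qed
qed

lemma Sym_transpose_in_subgroup_line:
  fixes p :: "int \<Rightarrow> 'a"
  assumes p: "inj p" "range p \<subseteq> S" and adjacent: "\<And>k. Sym_transpose S (p k) (p (k + 1)) \<in> K"
  shows "Sym_transpose S (p k) (p l) \<in> K"
proof -
  have pS: "p k \<in> S" for k using p(2) by auto
  have distance: "Sym_transpose S (p k) (p (k + int d)) \<in> K" for k d
  proof (induction d)
    case 0 show ?case by (simp only: of_nat_0 add_0_right Sym_transpose_same Sym_subgroup_id)
  next
    case (Suc d)
    define a b where "a = p (k + int d + 1)" and "b = p (k + int d)"
    show ?case
    proof (cases "d = 0")
      case True then show ?thesis using adjacent by simp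
    next
      case False
      then have "compose S (Sym_transpose S a b) (compose S (Sym_transpose S b (p k)) (Sym_transpose S a b))
          = Sym_transpose S a (p k)"
        unfolding a_def b_def by (intro Sym_transpose_triple) (auto simp: pS inj_eq[OF p(1)])
      moreover have "Sym_transpose S a b \<in> K"
        using adjacent[of "k + int d"] unfolding a_def b_def by (simp add: Sym_transpose_commute)
      moreover have "Sym_transpose S b (p k) \<in> K"
        using Suc.IH unfolding b_def by (simp add: Sym_transpose_commute)
      ultimately have "Sym_transpose S a (p k) \<in> K" by (metis Sym_subgroup_compose)
      then show ?thesis unfolding a_def by (simp add: Sym_transpose_commute ac_simps)
    qed
  qed
  show ?thesis
  proof (cases "k \<le> l")
    case True then show ?thesis using distance[of k "nat (l - k)"] by simp
  next
    case False then show ?thesis using distance[of l "nat (k - l)"] by (simp add: Sym_transpose_commute)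
  qed
qed

lemma Sym_transpose_in_subgroup_star:
  assumes "x \<in> S" and star: "\<And>y. y \<in> S \<Longrightarrow> Sym_transpose S x y \<in> K" and "a \<in> S" "b \<in> S"
  shows "Sym_transpose S a b \<in> K"
proof (cases "a = x \<or> b = x \<or> a = b")
  case True then show ?thesis using assms Sym_subgroup_id by (auto simp: Sym_transpose_same Sym_transpose_commute)
next
  case False
  then have "compose S (Sym_transpose S a x) (compose S (Sym_transpose S x b) (Sym_transpose S a x)) = Sym_transpose S a b"
    using assms by (intro Sym_transpose_triple) auto
  then show ?thesis using assms Sym_subgroup_compose by (metis Sym_transpose_commute)
qed

lemma restrict_permutes_in_subgroup:
  assumes transp: "\<And>a b. a \<in> S \<Longrightarrow> b \<in> S \<Longrightarrow> Sym_transpose S a b \<in> K"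
    and "D \<subseteq> S" "finite D" and "q permutes D"
  shows "restrict q S \<in> K"
  using \<open>q permutes D\<close> \<open>finite D\<close>
proof (induction rule: permutes_induct)
  case id show ?case by (simp only: id_def Sym_subgroup_id)
next
  case (swap a b q)
  have "q x \<in> S" if "x \<in> S" for x
    using that \<open>D \<subseteq> S\<close> permutes_in_image[OF \<open>q permutes D\<close>, of x] permutes_not_in[OF \<open>q permutes D\<close>, of x]
    by (cases "x \<in> D") auto
  then have "compose S (Sym_transpose S a b) (restrict q S) = restrict (transpose a b \<circ> q) S"
    unfolding Sym_transpose_def by (intro compose_restrict) blast
  then show ?case using swap transp \<open>D \<subseteq> S\<close> Sym_subgroup_compose by (metis subsetD)
qed

lemma finite_support_in_subgroup:
  assumes transp: "\<And>a b. a \<in> S \<Longrightarrow> b \<in> S \<Longrightarrow> Sym_transpose S a b \<in> K"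
    and f: "f \<in> Bij S" and fin: "finite {x \<in> S. f x \<noteq> x}"
  shows "f \<in> K"
proof -
  define D where "D = {x \<in> S. f x \<noteq> x}"
  have ext: "f \<in> extensional S" using f by (simp add: Bij_def)
  have "bij_betw f S S" using f by (simp add: Bij_def)
  then have "bij_betw f D D" unfolding D_def by (rule bij_betw_support)
  then have "bij_betw (\<lambda>x. if x \<in> D then f x else x) D D"
    by (rule bij_betw_cong[THEN iffD1, rotated]) simp
  then have "(\<lambda>x. if x \<in> D then f x else x) permutes D"
    by (rule bij_imp_permutes) simp
  then have "restrict (\<lambda>x. if x \<in> D then f x else x) S \<in> K"
    using fin by (intro restrict_permutes_in_subgroup[OF transp]) (auto simp: D_def)
  moreover have "f = restrict (\<lambda>x. if x \<in> D then f x else x) S"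
  proof
    fix x show "f x = restrict (\<lambda>x. if x \<in> D then f x else x) S x"
      using ext by (cases "x \<in> S") (auto simp: D_def extensional_def)
  qed
  ultimately show ?thesis by simp
qed

end

section \<open>Generating the symmetric group on \<open>{1..n}\<close>\<close>

definition cycle_perm :: "nat \<Rightarrow> nat \<Rightarrow> nat" where
  "cycle_perm n i = (if i = n then 1 else if 1 \<le> i \<and> i < n then i + 1 else i)"

lemma cycle_perm_permutes: "1 \<le> n \<Longrightarrow> cycle_perm n permutes {1..n}"
proof (rule bij_imp_permutes)
  show "bij_betw (cycle_perm n) {1..n} {1..n}"
    by (rule bij_betw_byWitness[where f' = "\<lambda>i. if i = 1 then n else i - 1"]) (auto simp: cycle_perm_def)
qed (auto simp: cycle_perm_def)

lemma cycle_perm_2: "cycle_perm 2 = transpose 1 2"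
  by (auto simp: cycle_perm_def transpose_def)

lemma conj_transpose:
  assumes "bij \<sigma>" shows "\<sigma> \<circ> transpose a b \<circ> inv_into UNIV \<sigma> = transpose (\<sigma> a) (\<sigma> b)"
proof -
  have "transpose (\<sigma> a) (\<sigma> b) \<circ> \<sigma> = \<sigma> \<circ> transpose a b"
    using assms by (simp add: transpose_comp_eq bij_is_inj)
  then have "transpose (\<sigma> a) (\<sigma> b) \<circ> (\<sigma> \<circ> inv_into UNIV \<sigma>) = \<sigma> \<circ> transpose a b \<circ> inv_into UNIV \<sigma>"
    by (metis comp_assoc)
  moreover have "\<sigma> \<circ> inv_into UNIV \<sigma> = id" using surj_iff assms bij_is_surj by blast
  ultimately show ?thesis by simp
qed

context
  fixes n :: nat and P :: "(nat \<Rightarrow> nat) \<Rightarrow> bool"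
  assumes n: "2 \<le> n" and P_id: "P id"
    and P_comp: "\<And>\<sigma> \<tau>. P \<sigma> \<Longrightarrow> P \<tau> \<Longrightarrow> P (\<sigma> \<circ> \<tau>)" and P_inv: "\<And>\<sigma>. P \<sigma> \<Longrightarrow> P (inv_into UNIV \<sigma>)"
    and P_cycle: "P (cycle_perm n)" and P_transpose: "P (transpose 1 2)"
begin

lemma generated_by_cycle_transpose_adjacent: "k + 1 < n \<Longrightarrow> P (transpose (k + 1) (k + 2))"
proof (induction k)
  case 0 then show ?case using P_transpose by (simp add: numeral_2_eq_2)
next
  case (Suc k)
  have "cycle_perm n permutes {1..n}" using n by (intro cycle_perm_permutes) simp
  then have "bij (cycle_perm n)" by (rule permutes_bij)
  moreover have "P (cycle_perm n \<circ> transpose (k + 1) (k + 2) \<circ> inv_into UNIV (cycle_perm n))"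
    using Suc P_comp P_inv P_cycle by simp
  moreover have "cycle_perm n (k + 1) = Suc k + 1" "cycle_perm n (k + 2) = Suc k + 2"
    using Suc.prems by (auto simp: cycle_perm_def)
  ultimately show ?case by (simp add: conj_transpose)
qed

lemma generated_by_cycle_transpose_transpose:
  assumes "a \<in> {1..n}" "b \<in> {1..n}" shows "P (transpose a b)"
proof -
  have from_1: "P (transpose 1 (k + 2))" if "k + 2 \<le> n" for k
    using that
  proof (induction k)
    case 0 then show ?case using P_transpose by (simp add: numeral_2_eq_2)
  next
    case (Suc k)
    have "transpose (k + 3) (k + 2) \<circ> transpose (k + 2) 1 \<circ> transpose (k + 3) (k + 2) = transpose (k + 3) 1"
      by (rule transpose_comp_triple) auto
    moreover have "P (transpose (k + 3) (k + 2))"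
      using generated_by_cycle_transpose_adjacent[of "k + 1"] Suc.prems
      by (simp add: transpose_commute numeral_3_eq_3)
    moreover have "P (transpose (k + 2) 1)" using Suc by (simp add: transpose_commute)
    ultimately have "P (transpose (k + 3) 1)" using P_comp by metis
    then show ?case by (simp add: transpose_commute numeral_3_eq_3)
  qed
  have star: "P (transpose 1 c)" if "c \<in> {1..n}" for c
  proof (cases "c = 1")
    case True then show ?thesis using P_id by simp
  next
    case False
    then have "c = (c - 2) + 2" "c - 2 + 2 \<le> n" using that by auto
    then show ?thesis using from_1 by metis
  qed
  show ?thesis
  proof (cases "a = 1 \<or> b = 1 \<or> a = b")
    case True then show ?thesis using star assms P_id by (auto simp: transpose_commute)
  next
    case False
    then have "transpose a 1 \<circ> transpose 1 b \<circ> transpose a 1 = transpose a b"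
      by (intro transpose_comp_triple) auto
    then show ?thesis using star assms P_comp by (metis transpose_commute)
  qed
qed

lemma permutes_generated_by_cycle_transpose:
  assumes "\<sigma> permutes {1..n}" shows "P \<sigma>"
  using assms finite_atLeastAtMost
proof (induction rule: permutes_induct)
  case id then show ?case by (rule P_id)
next
  case (swap a b \<tau>) then show ?case using generated_by_cycle_transpose_transpose P_comp by blast
qed

end

section \<open>Lifted permutations and shifts of \<open>X\<^sub>n\<close>\<close>

lemma mem_Xn_iff: "(i, m) \<in> Xn n \<longleftrightarrow> 1 \<le> i \<and> i \<le> n \<and> 1 \<le> m"
  by (auto simp: Xn_def)

lemma perm_lift_in_Xn: "\<sigma> permutes {1..n} \<Longrightarrow> x \<in> Xn n \<Longrightarrow> perm_lift n \<sigma> x \<in> Xn n"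
  by (cases x) (auto simp: perm_lift_def mem_Xn_iff dest: permutes_in_image[where x = "fst x"])

lemma compose_perm_lift:
  assumes "\<tau> permutes {1..n}"
  shows "compose (Xn n) (perm_lift n \<sigma>) (perm_lift n \<tau>) = perm_lift n (\<sigma> \<circ> \<tau>)"
proof
  fix x show "compose (Xn n) (perm_lift n \<sigma>) (perm_lift n \<tau>) x = perm_lift n (\<sigma> \<circ> \<tau>) x"
    using perm_lift_in_Xn[OF assms, of x] by (cases x) (auto simp: compose_def perm_lift_def)
qed

lemma perm_lift_id: "perm_lift n id = (\<lambda>x\<in>Xn n. x)"
  by (auto simp: perm_lift_def)

lemma perm_lift_Bij:
  assumes \<sigma>: "\<sigma> permutes {1..n}" shows "perm_lift n \<sigma> \<in> Bij (Xn n)"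
proof -
  have \<sigma>': "inv_into UNIV \<sigma> permutes {1..n}" using \<sigma> by (rule permutes_inv)
  have "bij_betw (perm_lift n \<sigma>) (Xn n) (Xn n)"
  proof (rule bij_betw_byWitness[where f' = "perm_lift n (inv_into UNIV \<sigma>)"])
    show "\<forall>x\<in>Xn n. perm_lift n (inv_into UNIV \<sigma>) (perm_lift n \<sigma> x) = x"
      using compose_perm_lift[OF \<sigma>, of "inv_into UNIV \<sigma>"] permutes_inv_o(2)[OF \<sigma>] perm_lift_id
      by (metis compose_eq restrict_apply')
    show "\<forall>x\<in>Xn n. perm_lift n \<sigma> (perm_lift n (inv_into UNIV \<sigma>) x) = x"
      using compose_perm_lift[OF \<sigma>', of \<sigma>] permutes_inv_o(1)[OF \<sigma>] perm_lift_id
      by (metis compose_eq restrict_apply')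
  qed (use perm_lift_in_Xn \<sigma> \<sigma>' in auto)
  then show ?thesis by (simp add: Bij_def perm_lift_def)
qed

lemma inv_perm_lift:
  "\<sigma> permutes {1..n} \<Longrightarrow> inv\<^bsub>BijGroup (Xn n)\<^esub> (perm_lift n \<sigma>) = perm_lift n (inv_into UNIV \<sigma>)"
  by (rule group.inv_equality[OF group_BijGroup])
    (simp_all add: BijGroup_mult_eq BijGroup_one_eq carrier_BijGroup perm_lift_Bij permutes_inv
      compose_perm_lift permutes_inv_o perm_lift_id)

definition shift :: "nat \<Rightarrow> nat \<Rightarrow> nat \<times> nat \<Rightarrow> nat \<times> nat" where
  "shift n j = restrict (\<lambda>(i, m). if i = 1 then (1, m + 1)
     else if i = j then (if m = 1 then (1, 1) else (j, m - 1)) else (i, m)) (Xn n)"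

definition shift_inv :: "nat \<Rightarrow> nat \<Rightarrow> nat \<times> nat \<Rightarrow> nat \<times> nat" where
  "shift_inv n j = restrict (\<lambda>(i, m). if i = 1 then (if m = 1 then (j, 1) else (1, m - 1))
     else if i = j then (j, m + 1) else (i, m)) (Xn n)"

definition shift_profile :: "nat \<Rightarrow> nat \<Rightarrow> int" where
  "shift_profile j i = of_bool (i = 1) - of_bool (i = j)"

lemma sum_shift_profile: "j \<in> {2..n} \<Longrightarrow> (\<Sum>i\<in>{1..n}. shift_profile j i) = 0"
  by (simp add: shift_profile_def sum_subtractf sum.If_cases)

lemma shift_Bij: "j \<in> {2..n} \<Longrightarrow> shift n j \<in> Bij (Xn n)"
  unfolding Bij_def
  by (auto simp: shift_def intro!: bij_betw_byWitness[where f' = "shift_inv n j"])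
    (auto simp: shift_def shift_inv_def mem_Xn_iff split: if_splits)

lemma shift_inv_Bij: "j \<in> {2..n} \<Longrightarrow> shift_inv n j \<in> Bij (Xn n)"
  unfolding Bij_def
  by (auto simp: shift_inv_def intro!: bij_betw_byWitness[where f' = "shift n j"])
    (auto simp: shift_def shift_inv_def mem_Xn_iff split: if_splits)

lemma inv_shift: assumes "j \<in> {2..n}" shows "inv\<^bsub>BijGroup (Xn n)\<^esub> (shift n j) = shift_inv n j"
proof (rule group.inv_equality[OF group_BijGroup])
  have "compose (Xn n) (shift_inv n j) (shift n j) = (\<lambda>x\<in>Xn n. x)"
    using assms by (auto simp: compose_def shift_def shift_inv_def mem_Xn_iff fun_eq_iff)
  then show "shift_inv n j \<otimes>\<^bsub>BijGroup (Xn n)\<^esub> shift n j = \<one>\<^bsub>BijGroup (Xn n)\<^esub>"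
    using assms shift_Bij shift_inv_Bij by (simp add: BijGroup_mult_eq BijGroup_one_eq)
qed (use assms shift_Bij shift_inv_Bij in \<open>auto simp: carrier_BijGroup\<close>)

lemma perm_lift_conj_shift:
  "j \<in> {2..n} \<Longrightarrow> compose (Xn n) (perm_lift n (transpose 2 j))
     (compose (Xn n) (shift n 2) (perm_lift n (transpose 2 j))) = shift n j"
  by (rule ext, rename_tac x, case_tac x) (auto simp: compose_def perm_lift_def shift_def mem_Xn_iff transpose_def)

lemma shift_commutator:
  "3 \<le> n \<Longrightarrow> compose (Xn n) (shift n 2) (compose (Xn n) (shift n 3)
     (compose (Xn n) (shift_inv n 2) (shift_inv n 3))) = Sym_transpose (Xn n) (1, 1) (1, 2)"
  by (rule ext, rename_tac x, case_tac x)
    (auto simp: compose_def shift_def shift_inv_def Sym_transpose_def mem_Xn_iff transpose_def)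

text \<open>Branches 2 and 1, glued at their first points, form a copy of \<open>\<int>\<close> on which
  \<open>shift n 2\<close> acts as the translation \<open>k \<mapsto> k + 1\<close>.\<close>

definition line_point :: "int \<Rightarrow> nat \<times> nat" where
  "line_point k = (if 1 \<le> k then (1, nat k) else (2, nat (1 - k)))"

lemma line_point_in_Xn: "2 \<le> n \<Longrightarrow> line_point k \<in> Xn n"
  by (auto simp: line_point_def mem_Xn_iff)

lemma inj_line_point: "inj line_point"
  by (auto simp: inj_def line_point_def split: if_splits)

lemma shift_line_point: "2 \<le> n \<Longrightarrow> shift n 2 (line_point k) = line_point (k + 1)"
  by (auto simp: line_point_def shift_def mem_Xn_iff nat_add_distrib)

lemma line_point_surj: "i \<in> {1, 2} \<Longrightarrow> 1 \<le> m \<Longrightarrow> \<exists>k. line_point k = (i, m)"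
  by (auto simp: line_point_def intro: exI[of _ "int m"] exI[of _ "1 - int m"])

section \<open>Eventual translations\<close>

definition eventual_translation :: "nat \<Rightarrow> (nat \<times> nat \<Rightarrow> nat \<times> nat) \<Rightarrow> (nat \<Rightarrow> int) \<Rightarrow> bool" where
  "eventual_translation n g t \<longleftrightarrow>
     (\<exists>N. \<forall>i\<in>{1..n}. \<forall>m\<ge>N. 1 \<le> int m + t i \<and> g (i, m) = (i, nat (int m + t i)))"

lemma eventual_translation_id:
  "(\<And>i. i \<in> {1..n} \<Longrightarrow> t i = 0) \<Longrightarrow> eventual_translation n (\<lambda>x\<in>Xn n. x) t"
  unfolding eventual_translation_def by (rule exI[of _ 1]) (auto simp: mem_Xn_iff)

lemma finite_abs_bound:
  fixes t :: "'a \<Rightarrow> int"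
  assumes "finite A" obtains B :: nat where "\<And>i. i \<in> A \<Longrightarrow> \<bar>t i\<bar> \<le> int B"
proof -
  have "\<bar>t i\<bar> \<le> int (\<Sum>i\<in>A. nat \<bar>t i\<bar>)" if "i \<in> A" for i
    using member_le_sum[of i A "\<lambda>i. nat \<bar>t i\<bar>"] assms that by linarith
  then show ?thesis using that by blast
qed

lemma eventual_translation_compose:
  assumes "eventual_translation n g t" and "eventual_translation n f s"
  shows "eventual_translation n (compose (Xn n) g f) (\<lambda>i. t i + s i)"
proof -
  obtain Ng where Ng: "\<forall>i\<in>{1..n}. \<forall>m\<ge>Ng. 1 \<le> int m + t i \<and> g (i, m) = (i, nat (int m + t i))"
    using assms(1) by (auto simp: eventual_translation_def)
  obtain Nf where Nf: "\<forall>i\<in>{1..n}. \<forall>m\<ge>Nf. 1 \<le> int m + s i \<and> f (i, m) = (i, nat (int m + s i))"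
    using assms(2) by (auto simp: eventual_translation_def)
  obtain B where B: "\<And>i. i \<in> {1..n} \<Longrightarrow> \<bar>s i\<bar> \<le> int B" using finite_abs_bound by blast
  define N where "N = Nf + Ng + B + 1"
  have "1 \<le> int m + (t i + s i) \<and> compose (Xn n) g f (i, m) = (i, nat (int m + (t i + s i)))"
    if i: "i \<in> {1..n}" and m: "N \<le> m" for i m
  proof -
    have "Ng \<le> nat (int m + s i)" using B[OF i] m by (simp add: N_def)
    then have "1 \<le> int (nat (int m + s i)) + t i \<and>
        g (i, nat (int m + s i)) = (i, nat (int (nat (int m + s i)) + t i))"
      using Ng i by blast
    moreover have f: "1 \<le> int m + s i" "f (i, m) = (i, nat (int m + s i))" using Nf i m by (auto simp: N_def)
    ultimately have "1 \<le> int m + s i + t i" "g (f (i, m)) = (i, nat (int m + s i + t i))" by simp_all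
    moreover have "(i, m) \<in> Xn n" using i m by (simp add: N_def mem_Xn_iff)
    ultimately show ?thesis by (simp add: compose_def algebra_simps)
  qed
  then show ?thesis unfolding eventual_translation_def by blast
qed

lemma eventual_translation_inv:
  assumes "g \<in> Bij (Xn n)" and "eventual_translation n g t"
  shows "eventual_translation n (restrict (inv_into (Xn n) g) (Xn n)) (\<lambda>i. - t i)"
proof -
  obtain Ng where Ng: "\<forall>i\<in>{1..n}. \<forall>m\<ge>Ng. 1 \<le> int m + t i \<and> g (i, m) = (i, nat (int m + t i))"
    using assms(2) by (auto simp: eventual_translation_def)
  have inj: "inj_on g (Xn n)" using assms(1) by (auto simp: Bij_def bij_betw_def)
  obtain B where B: "\<And>i. i \<in> {1..n} \<Longrightarrow> \<bar>t i\<bar> \<le> int B" using finite_abs_bound by blast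
  define N where "N = Ng + B + 1"
  have "1 \<le> int m - t i \<and> restrict (inv_into (Xn n) g) (Xn n) (i, m) = (i, nat (int m - t i))"
    if i: "i \<in> {1..n}" and m: "N \<le> m" for i m
  proof -
    have bound: "Ng \<le> nat (int m - t i)" "1 \<le> int m - t i" using B[OF i] m by (simp_all add: N_def)
    then have "g (i, nat (int m - t i)) = (i, m)" using Ng i by auto
    moreover have "(i, m) \<in> Xn n" "(i, nat (int m - t i)) \<in> Xn n" using i m bound by (auto simp: mem_Xn_iff N_def)
    ultimately show ?thesis using inj bound by (metis inv_into_f_f restrict_apply')
  qed
  then show ?thesis unfolding eventual_translation_def by (simp only: diff_conv_add_uminus[symmetric]) blast
qed

lemma Hn_eventual_translation:
  assumes "g \<in> Hn n" shows "\<exists>t. eventual_translation n g t"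
proof -
  obtain z t where g: "g \<in> Bij (Xn n)" and zt: "\<forall>i\<in>{1..n}. 1 \<le> z i \<and> (\<forall>m. z i \<le> m \<longrightarrow>
      fst (g (i, m)) = i \<and> int (snd (g (i, m))) = int m + t i)"
    using assms by (auto simp: Hn_def)
  define N where "N = (\<Sum>i\<in>{1..n}. z i)"
  have "1 \<le> int m + t i \<and> g (i, m) = (i, nat (int m + t i))" if i: "i \<in> {1..n}" and m: "N \<le> m" for i m
  proof -
    have "z i \<le> N" unfolding N_def by (rule member_le_sum) (use i in auto)
    then have gim: "fst (g (i, m)) = i" "int (snd (g (i, m))) = int m + t i" using zt i m by auto
    have "1 \<le> z i" using zt i by blast
    with \<open>z i \<le> N\<close> have "(i, m) \<in> Xn n" using i m by (simp add: mem_Xn_iff)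
    then have "g (i, m) \<in> Xn n" using g by (auto simp: Bij_def bij_betw_apply)
    then show ?thesis using gim by (cases "g (i, m)") (auto simp: mem_Xn_iff)
  qed
  then show ?thesis unfolding eventual_translation_def by blast
qed

lemma finite_support_eventual_translation_0:
  assumes "eventual_translation n g (\<lambda>_. 0)" shows "finite {x \<in> Xn n. g x \<noteq> x}"
proof -
  obtain N where "\<forall>i\<in>{1..n}. \<forall>m\<ge>N. g (i, m) = (i, m)"
    using assms by (auto simp: eventual_translation_def)
  then have "{x \<in> Xn n. g x \<noteq> x} \<subseteq> {1..n} \<times> {..<N}"
    by (auto simp: Xn_def) (meson atLeastAtMost_iff not_less)
  then show ?thesis by (rule finite_subset) simp
qed

lemma card_Diff_image_eq:
  assumes "bij_betw g S S" and "T \<subseteq> S" shows "card (S - g ` T) = card (S - T)"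
proof -
  have inj: "inj_on g S" and "g ` S = S" using assms(1) by (auto simp: bij_betw_def)
  then have "g ` (S - T) = S - g ` T" using assms(2) by (simp add: inj_on_image_set_diff)
  then show ?thesis using inj by (metis Diff_subset card_image inj_on_subset)
qed

lemma eventual_translation_image_tail:
  assumes "eventual_translation n g t"
  obtains N where "\<And>M. N \<le> M \<Longrightarrow> g ` (SIGMA i:{1..n}. {M..}) = (SIGMA i:{1..n}. {nat (int M + t i)..})"
proof -
  obtain N where N: "\<forall>i\<in>{1..n}. \<forall>m\<ge>N. 1 \<le> int m + t i \<and> g (i, m) = (i, nat (int m + t i))"
    using assms by (auto simp: eventual_translation_def)
  have "g ` (SIGMA i:{1..n}. {M..}) = (SIGMA i:{1..n}. {nat (int M + t i)..})" if "N \<le> M" for M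
  proof
    show "g ` (SIGMA i:{1..n}. {M..}) \<subseteq> (SIGMA i:{1..n}. {nat (int M + t i)..})"
      using N that by force
  next
    show "(SIGMA i:{1..n}. {nat (int M + t i)..}) \<subseteq> g ` (SIGMA i:{1..n}. {M..})"
    proof
      fix x assume "x \<in> (SIGMA i:{1..n}. {nat (int M + t i)..})"
      then obtain i m' where x: "x = (i, m')" and i: "i \<in> {1..n}" and m': "nat (int M + t i) \<le> m'" by auto
      define m where "m = nat (int m' - t i)"
      have "M \<le> m" "int m + t i = int m'" using m' unfolding m_def by auto
      then have "g (i, m) = (i, m')" and "(i, m) \<in> (SIGMA i:{1..n}. {M..})" using N i that by auto
      then show "x \<in> g ` (SIGMA i:{1..n}. {M..})" unfolding x by (metis image_eqI)
    qed
  qed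
  then show ?thesis using that by blast
qed

text \<open>On branch \<open>i\<close>, \<open>g\<close> maps the points above a high level \<open>M\<close> onto the points above
  level \<open>M + t i\<close>, so the finite complements below these levels have the same size.\<close>

lemma eventual_translation_sum_eq_0:
  assumes g: "g \<in> Bij (Xn n)" and "eventual_translation n g t"
  shows "(\<Sum>i\<in>{1..n}. t i) = 0"
proof -
  obtain N where N: "\<And>M. N \<le> M \<Longrightarrow> g ` (SIGMA i:{1..n}. {M..}) = (SIGMA i:{1..n}. {nat (int M + t i)..})"
    using eventual_translation_image_tail[OF assms(2)] by blast
  obtain B where B: "\<And>i. i \<in> {1..n} \<Longrightarrow> \<bar>t i\<bar> \<le> int B" using finite_abs_bound by blast
  define M where "M = N + B + 1"
  have M: "1 \<le> int M + t i" if "i \<in> {1..n}" for i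
    using B[OF that] by (simp add: M_def)
  have "Xn n - g ` (SIGMA i:{1..n}. {M..}) = (SIGMA i:{1..n}. {1..<nat (int M + t i)})"
    using N[of M] M by (auto simp: M_def Xn_def)
  moreover have "Xn n - (SIGMA i:{1..n}. {M..}) = (SIGMA i:{1..n}. {1..<M})"
    by (auto simp: Xn_def M_def)
  moreover have "card (Xn n - g ` (SIGMA i:{1..n}. {M..})) = card (Xn n - (SIGMA i:{1..n}. {M..}))"
    using g by (intro card_Diff_image_eq) (auto simp: Bij_def Xn_def M_def)
  ultimately have "(\<Sum>i\<in>{1..n}. nat (int M + t i) - 1) = (\<Sum>i\<in>{1..n}. M - 1)"
    by (simp add: card_SigmaI)
  then have "(\<Sum>i\<in>{1..n}. int (nat (int M + t i) - 1)) = (\<Sum>i\<in>{1..n}. int (M - 1))"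
    by (simp only: of_nat_sum[symmetric])
  moreover have "(\<Sum>i\<in>{1..n}. int (nat (int M + t i) - 1)) = (\<Sum>i\<in>{1..n}. (int M - 1) + t i)"
  proof (rule sum.cong)
    fix i assume "i \<in> {1..n}"
    then have "1 \<le> int M + t i" by (rule M)
    then show "int (nat (int M + t i) - 1) = int M - 1 + t i" by (subst of_nat_diff) auto
  qed simp
  moreover have "int (M - 1) = int M - 1" by (simp add: M_def)
  ultimately show ?thesis by (simp add: sum.distrib)
qed

lemma eventual_translation_shift: "j \<in> {2..n} \<Longrightarrow> eventual_translation n (shift n j) (shift_profile j)"
  unfolding eventual_translation_def
  by (rule exI[of _ 2]) (auto simp: shift_def shift_profile_def mem_Xn_iff nat_diff_distrib)

lemma zero_sum_induct [consumes 1, case_names zero plus minus]: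
  fixes t :: "nat \<Rightarrow> int"
  assumes "(\<Sum>i\<in>{1..n}. t i) = 0"
    and zero: "\<And>t. (\<And>i. i \<in> {1..n} \<Longrightarrow> t i = 0) \<Longrightarrow> P t"
    and plus: "\<And>t j. j \<in> {2..n} \<Longrightarrow> P t \<Longrightarrow> P (\<lambda>i. t i + shift_profile j i)"
    and minus: "\<And>t j. j \<in> {2..n} \<Longrightarrow> P t \<Longrightarrow> P (\<lambda>i. t i - shift_profile j i)"
  shows "P t"
  using assms(1)
proof (induction "\<Sum>i\<in>{2..n}. nat \<bar>t i\<bar>" arbitrary: t rule: less_induct)
  case less
  show ?case
  proof (cases "\<forall>j\<in>{2..n}. t j = 0")
    case True
    have "t i = 0" if "i \<in> {1..n}" for i
    proof (cases "i = 1")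
      case True
      have "{1..n} = insert 1 {2..n}" using that by auto
      then show ?thesis using less.prems \<open>\<forall>j\<in>{2..n}. t j = 0\<close> True by simp
    qed (use True that in auto)
    then show ?thesis by (rule zero)
  next
    case False
    then obtain j where j: "j \<in> {2..n}" "t j \<noteq> 0" by blast
    define t' where "t' i = (if t j < 0 then t i - shift_profile j i else t i + shift_profile j i)" for i
    have "(\<Sum>i\<in>{1..n}. t' i) = 0"
      using less.prems sum_shift_profile[OF j(1)]
      by (cases "t j < 0") (simp_all add: t'_def sum_subtractf sum.distrib)
    moreover have "(\<Sum>i\<in>{2..n}. nat \<bar>t' i\<bar>) < (\<Sum>i\<in>{2..n}. nat \<bar>t i\<bar>)"
      by (rule sum_strict_mono_ex1) (use j in \<open>auto simp: t'_def shift_profile_def\<close>)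
    ultimately have "P t'" using less.hyps by blast
    then show ?thesis
      using plus[OF j(1), of t'] minus[OF j(1), of t'] by (cases "t j < 0") (simp_all add: t'_def)
  qed
qed

section \<open>Subgroups of \<open>Sym(X\<^sub>n)\<close> containing the generators\<close>

context
  fixes n :: nat and K
  assumes n: "2 \<le> n" and K: "subgroup K (BijGroup (Xn n))"
begin

lemma perm_lift_in_subgroup:
  assumes "perm_lift n (cycle_perm n) \<in> K" and "perm_lift n (transpose 1 2) \<in> K"
    and "\<sigma> permutes {1..n}"
  shows "perm_lift n \<sigma> \<in> K"
proof -
  let ?P = "\<lambda>\<sigma>. \<sigma> permutes {1..n} \<and> perm_lift n \<sigma> \<in> K"
  have "?P \<sigma>"
  proof (rule permutes_generated_by_cycle_transpose[OF n _ _ _ _ _ \<open>\<sigma> permutes {1..n}\<close>])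
    show "?P id" using Sym_subgroup_id[OF K] by (simp add: perm_lift_id permutes_id)
    show "?P (\<sigma> \<circ> \<tau>)" if "?P \<sigma>" "?P \<tau>" for \<sigma> \<tau>
      using that Sym_subgroup_compose[OF K] by (metis compose_perm_lift permutes_compose)
    show "?P (inv_into UNIV \<sigma>)" if "?P \<sigma>" for \<sigma>
      using that subgroup.m_inv_closed[OF K] by (metis inv_perm_lift permutes_inv)
    show "?P (cycle_perm n)" using assms(1) n cycle_perm_permutes[of n] by simp
    show "?P (transpose 1 2)" using assms(2) n by (simp add: permutes_swap_id)
  qed
  then show ?thesis by blast
qed

lemma shift_in_subgroup:
  assumes lifts: "\<And>\<sigma>. \<sigma> permutes {1..n} \<Longrightarrow> perm_lift n \<sigma> \<in> K"
    and "shift n 2 \<in> K" and j: "j \<in> {2..n}"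
  shows "shift n j \<in> K"
proof -
  have "perm_lift n (transpose 2 j) \<in> K" using j by (intro lifts permutes_swap_id) auto
  then show ?thesis
    using perm_lift_conj_shift[OF j] Sym_subgroup_compose[OF K] \<open>shift n 2 \<in> K\<close> by metis
qed

lemma Sym_transpose_in_subgroup:
  assumes lifts: "\<And>\<sigma>. \<sigma> permutes {1..n} \<Longrightarrow> perm_lift n \<sigma> \<in> K"
    and "shift n 2 \<in> K" and "Sym_transpose (Xn n) (1, 1) (1, 2) \<in> K"
    and "x \<in> Xn n" "y \<in> Xn n"
  shows "Sym_transpose (Xn n) x y \<in> K"
proof -
  have range: "range line_point \<subseteq> Xn n" using line_point_in_Xn n by blast
  have "Sym_transpose (Xn n) (line_point 1) (line_point (1 + 1)) \<in> K"
    using assms(3) by (simp add: line_point_def)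
  then have "Sym_transpose (Xn n) (line_point k) (line_point (k + 1)) \<in> K" for k
    by (rule Sym_transpose_in_subgroup_adjacent[OF K range \<open>shift n 2 \<in> K\<close> shift_line_point[OF n]])
  then have line: "Sym_transpose (Xn n) (line_point k) (line_point l) \<in> K" for k l
    by (rule Sym_transpose_in_subgroup_line[OF K inj_line_point range])
  have "Sym_transpose (Xn n) (2, 1) z \<in> K" if z: "z \<in> Xn n" for z
  proof -
    obtain i m where z: "z = (i, m)" "1 \<le> i" "i \<le> n" "1 \<le> m" using z by (cases z) (auto simp: mem_Xn_iff)
    have centre: "line_point 0 = (2, 1)" by (simp add: line_point_def)
    show ?thesis
    proof (cases "i \<le> 2")
      case True
      then have "i \<in> {1, 2}" using z by auto
      then obtain k where "line_point k = z" using line_point_surj[of i m] z by auto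
      then show ?thesis using line[of 0 k] centre by simp
    next
      case False
      obtain k where k: "line_point k = (1, m)" using line_point_surj[of 1 m] z by auto
      have g: "perm_lift n (transpose 1 i) \<in> K" using z by (intro lifts permutes_swap_id) auto
      have "perm_lift n (transpose 1 i) (2, 1) = (2, 1)" "perm_lift n (transpose 1 i) (1, m) = z"
        using z n False by (auto simp: perm_lift_def mem_Xn_iff)
      then show ?thesis
        using Sym_transpose_conj_in_subgroup[OF K g, of "(2, 1)" "(1, m)"] line[of 0 k] centre k z n
        by (auto simp: mem_Xn_iff)
    qed
  qed
  moreover have "(2, 1) \<in> Xn n" using n by (simp add: mem_Xn_iff)
  ultimately show ?thesis using Sym_transpose_in_subgroup_star[OF K] assms(4,5) by blast
qed

lemma eventual_translation_realized_in_subgroup: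
  assumes shifts: "\<And>j. j \<in> {2..n} \<Longrightarrow> shift n j \<in> K" and "(\<Sum>i\<in>{1..n}. t i) = 0"
  shows "\<exists>E\<in>K. eventual_translation n E t"
  using assms(2)
proof (induction rule: zero_sum_induct)
  case (zero t)
  then show ?case using Sym_subgroup_id[OF K] eventual_translation_id by blast
next
  case (plus t j)
  then obtain E where "E \<in> K" "eventual_translation n E t" by blast
  then have "eventual_translation n (compose (Xn n) (shift n j) E) (\<lambda>i. t i + shift_profile j i)"
    using eventual_translation_compose[OF eventual_translation_shift[OF plus(1)]] by (simp add: add.commute)
  then show ?case using Sym_subgroup_compose[OF K] shifts plus(1) \<open>E \<in> K\<close> by blast
next
  case (minus t j)
  then obtain E where "E \<in> K" "eventual_translation n E t" by blast
  moreover have "eventual_translation n (restrict (inv_into (Xn n) (shift n j)) (Xn n)) (\<lambda>i. - shift_profile j i)"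
    using minus(1) by (intro eventual_translation_inv shift_Bij eventual_translation_shift)
  ultimately have "eventual_translation n (compose (Xn n) (restrict (inv_into (Xn n) (shift n j)) (Xn n)) E)
      (\<lambda>i. t i - shift_profile j i)"
    using eventual_translation_compose by fastforce
  then show ?case using Sym_subgroup_compose[OF K] Sym_subgroup_inv[OF K] shifts minus(1) \<open>E \<in> K\<close> by blast
qed

lemma Hn_subset_subgroup:
  assumes shifts: "\<And>j. j \<in> {2..n} \<Longrightarrow> shift n j \<in> K"
    and transpositions: "\<And>x y. x \<in> Xn n \<Longrightarrow> y \<in> Xn n \<Longrightarrow> Sym_transpose (Xn n) x y \<in> K"
  shows "Hn n \<subseteq> K"
proof
  fix g assume "g \<in> Hn n"
  then obtain t where t: "eventual_translation n g t" using Hn_eventual_translation by blast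
  have g: "g \<in> Bij (Xn n)" using \<open>g \<in> Hn n\<close> by (simp add: Hn_def)
  obtain E where E: "E \<in> K" "eventual_translation n E t"
    using eventual_translation_realized_in_subgroup[OF shifts eventual_translation_sum_eq_0[OF g t]] by blast
  have E_Bij: "E \<in> Bij (Xn n)" using Sym_subgroup_Bij[OF K E(1)] .
  define F where "F = compose (Xn n) (restrict (inv_into (Xn n) E) (Xn n)) g"
  have "eventual_translation n F (\<lambda>i. - t i + t i)"
    unfolding F_def by (rule eventual_translation_compose[OF eventual_translation_inv[OF E_Bij E(2)] t])
  then have "eventual_translation n F (\<lambda>_. 0)" by simp
  moreover have "F \<in> Bij (Xn n)" unfolding F_def by (intro compose_Bij restrict_inv_into_Bij E_Bij g)
  ultimately have "F \<in> K"
    using finite_support_in_subgroup[OF K transpositions] finite_support_eventual_translation_0 by blast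
  moreover have "g = E \<otimes>\<^bsub>BijGroup (Xn n)\<^esub> F"
  proof -
    have "F = inv\<^bsub>BijGroup (Xn n)\<^esub> E \<otimes>\<^bsub>BijGroup (Xn n)\<^esub> g"
      using E_Bij g restrict_inv_into_Bij[OF E_Bij] by (simp add: F_def BijGroup_mult_eq inv_BijGroup)
    then show ?thesis
      using group.inv_solve_left[OF group_BijGroup[of "Xn n"], of F E g] \<open>F \<in> Bij (Xn n)\<close> E_Bij g
      by (simp add: carrier_BijGroup)
  qed
  ultimately show "g \<in> K" using subgroup.m_closed[OF K E(1)] by simp
qed

lemma Sym_transpose_in_subgroup_of_shifts:
  assumes "3 \<le> n" and "shift n 2 \<in> K" and "shift n 3 \<in> K"
  shows "Sym_transpose (Xn n) (1, 1) (1, 2) \<in> K"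
proof -
  have "shift_inv n j \<in> K" if "j \<in> {2, 3}" for j
  proof -
    have "j \<in> {2..n}" using that assms(1) by auto
    then have "shift_inv n j = inv\<^bsub>BijGroup (Xn n)\<^esub> (shift n j)" by (rule inv_shift[symmetric])
    moreover have "shift n j \<in> K" using that assms(2,3) by auto
    ultimately show ?thesis by (simp add: subgroup.m_inv_closed[OF K])
  qed
  then show ?thesis
    using shift_commutator[OF assms(1)] Sym_subgroup_compose[OF K] assms(2,3) by (metis insertCI)
qed

theorem HnSn_subset_subgroup:
  assumes "perm_lift n (cycle_perm n) \<in> K" "perm_lift n (transpose 1 2) \<in> K"
    and "shift n 2 \<in> K" and "Sym_transpose (Xn n) (1, 1) (1, 2) \<in> K"
  shows "HnSn n \<subseteq> K"
proof -
  have lifts: "\<And>\<sigma>. \<sigma> permutes {1..n} \<Longrightarrow> perm_lift n \<sigma> \<in> K"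
    using perm_lift_in_subgroup assms(1,2) by blast
  have "Hn n \<subseteq> K"
    using Hn_subset_subgroup shift_in_subgroup[OF lifts assms(3)] Sym_transpose_in_subgroup[OF lifts assms(3,4)]
    by blast
  moreover have "Sn_lift n \<subseteq> K" using lifts by (auto simp: Sn_lift_def)
  ultimately show ?thesis
    unfolding HnSn_def SymX_def by (intro group.generate_subgroup_incl[OF group_BijGroup] K) auto
qed

end

lemma shift_in_Hn:
  assumes "j \<in> {2..n}" shows "shift n j \<in> Hn n"
proof -
  have "\<forall>i\<in>{1..n}. 1 \<le> (2::nat) \<and> (\<forall>m. 2 \<le> m \<longrightarrow>
      fst (shift n j (i, m)) = i \<and> int (snd (shift n j (i, m))) = int m + shift_profile j i)"
    using assms by (auto simp: shift_def shift_profile_def mem_Xn_iff)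
  then show ?thesis using shift_Bij[OF assms] unfolding Hn_def mem_Collect_eq
    by (intro conjI exI[of _ "\<lambda>_. 2"] exI[of _ "shift_profile j"]) simp_all
qed

lemma Sym_transpose_in_Hn:
  assumes "a \<in> Xn n" "b \<in> Xn n" shows "Sym_transpose (Xn n) a b \<in> Hn n"
proof -
  define z where "z = Suc (max (snd a) (snd b))"
  have "\<forall>i\<in>{1..n}. 1 \<le> z \<and> (\<forall>m. z \<le> m \<longrightarrow>
      fst (Sym_transpose (Xn n) a b (i, m)) = i \<and> int (snd (Sym_transpose (Xn n) a b (i, m))) = int m + 0)"
    by (auto simp: z_def Sym_transpose_def transpose_def mem_Xn_iff)
  then show ?thesis using Sym_transpose_Bij[OF assms] unfolding Hn_def mem_Collect_eq
    by (intro conjI exI[of _ "\<lambda>_. z"] exI[of _ "\<lambda>_. 0"]) simp_all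
qed

definition HnSn_generators :: "nat \<Rightarrow> (nat \<times> nat \<Rightarrow> nat \<times> nat) set" where
  "HnSn_generators n = (if n = 2
     then {perm_lift n (transpose 1 2), shift n 2, Sym_transpose (Xn n) (1, 1) (1, 2)}
     else {perm_lift n (cycle_perm n), perm_lift n (transpose 1 2), shift n 2})"

lemma finite_HnSn_generators: "finite (HnSn_generators n)"
  by (simp add: HnSn_generators_def)

lemma card_HnSn_generators: "card (HnSn_generators n) \<le> 3"
  by (auto simp: HnSn_generators_def card_insert_if)

lemma HnSn_generators_subset:
  assumes "2 \<le> n" shows "HnSn_generators n \<subseteq> Hn n \<union> Sn_lift n"
proof -
  have "perm_lift n \<sigma> \<in> Sn_lift n" if "\<sigma> permutes {1..n}" for \<sigma> using that by (auto simp: Sn_lift_def)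
  moreover have "cycle_perm n permutes {1..n}" "transpose 1 2 permutes {1..n}"
    using assms cycle_perm_permutes[of n] by (auto intro: permutes_swap_id)
  moreover have "shift n 2 \<in> Hn n" "Sym_transpose (Xn n) (1, 1) (1, 2) \<in> Hn n"
    using assms by (auto intro: shift_in_Hn Sym_transpose_in_Hn simp: mem_Xn_iff)
  ultimately show ?thesis by (auto simp: HnSn_generators_def)
qed

lemma HnSn_subset_generate_generators:
  assumes n: "2 \<le> n" shows "HnSn n \<subseteq> generate (SymX n) (HnSn_generators n)"
proof -
  define K where "K = generate (SymX n) (HnSn_generators n)"
  have "Hn n \<union> Sn_lift n \<subseteq> carrier (BijGroup (Xn n))"
    using perm_lift_Bij by (auto simp: Hn_def Sn_lift_def carrier_BijGroup)
  then have K: "subgroup K (BijGroup (Xn n))"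
    unfolding K_def SymX_def using HnSn_generators_subset[OF n]
    by (intro group.generate_is_subgroup[OF group_BijGroup]) blast
  have gen: "x \<in> K" if "x \<in> HnSn_generators n" for x
    using that unfolding K_def by (rule generate.incl)
  have lifts: "perm_lift n (cycle_perm n) \<in> K" "perm_lift n (transpose 1 2) \<in> K" and "shift n 2 \<in> K"
    using gen by (auto simp: HnSn_generators_def cycle_perm_2)
  moreover have "Sym_transpose (Xn n) (1, 1) (1, 2) \<in> K"
  proof (cases "n = 2")
    case True then show ?thesis using gen by (simp add: HnSn_generators_def)
  next
    case False
    then have "3 \<le> n" using n by simp
    moreover have "shift n 3 \<in> K"
      using \<open>3 \<le> n\<close> perm_lift_in_subgroup[OF n K lifts] by (intro shift_in_subgroup[OF n K _ \<open>shift n 2 \<in> K\<close>]) auto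
    ultimately show ?thesis using Sym_transpose_in_subgroup_of_shifts[OF n K] \<open>shift n 2 \<in> K\<close> by blast
  qed
  ultimately have "HnSn n \<subseteq> K" by (rule HnSn_subset_subgroup[OF n K])
  then show ?thesis by (simp only: K_def)
qed

theorem lemma3p1:
  fixes n :: nat
  assumes "n \<ge> 2"
  shows "\<exists>A. A \<subseteq> HnSn n \<and> finite A \<and> card A \<le> 3 \<and> generate (SymX n) A = HnSn n"
proof (intro exI conjI)
  let ?A = "HnSn_generators n"
  have gen: "?A \<subseteq> Hn n \<union> Sn_lift n" using assms by (rule HnSn_generators_subset)
  then show "?A \<subseteq> HnSn n" unfolding HnSn_def by (blast intro: generate.incl)
  show "finite ?A" by (rule finite_HnSn_generators)
  show "card ?A \<le> 3" by (rule card_HnSn_generators)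
  show "generate (SymX n) ?A = HnSn n"
  proof
    show "generate (SymX n) ?A \<subseteq> HnSn n"
      unfolding HnSn_def SymX_def using gen by (rule group.mono_generate[OF group_BijGroup])
    show "HnSn n \<subseteq> generate (SymX n) ?A" using assms by (rule HnSn_subset_generate_generators)
  qed
qed

end
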